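(* Let $p$ be an odd prime, let $Q_0$ be an integer with $p\mid Q_0$, let $L$ and $v$ be positive integers, and let $\boldsymbol{h}=(h_1,\dots,h_L)\in\mathbb{Z}^L$. For $I\subseteq\{1,\dots,L\}$ put $H_I=\sum_{i\in I}h_i$, let $T=\{H_I: I\subseteq\{1,\dots,L\}\}$, and for $\tau\in T$ let $\mu(\tau)=\left|\{I\subseteq\{1,\dots,L\}: H_I\equiv\tau \ (\mathrm{mod}\ p^v)\}\right|$. If $2\mid\mu(\tau)$ for all $\tau\in T$, then there exists some $1\le i\le L$ such that $p\mid h_i$. *)

theory Defs
  imports "HOL-Number_Theory.Number_Theory"
begin

definition H_sub :: "(nat \<Rightarrow> int) \<Rightarrow> nat set \<Rightarrow> int" where
  "H_sub h I = (\<Sum>i\<in>I. h i)"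

end

theory Submission
  imports Defs
begin

text \<open>
  Let c_k(t) count the sets I \<subseteq> {1..k} with H_I \<equiv> t (mod p^v), so that
  c_{k+1}(t) = c_k(t) + c_k(t - h_{k+1}). If the parity of c_{k+1} were constant, the parity
  of c_k would be invariant or alternating under the shift by h_{k+1}. When p does not
  divide h_{k+1} this shift generates Z/p^v, so in the first case the parity of c_k is
  constant, and the second case is impossible because p^v is odd. As the parity of c_0 is
  not constant, by induction neither is that of c_L; in particular some c_L(t) is odd.
\<close>

lemma card_Pow_insert_filter:
  assumes "finite A" and "a \<notin> A"
  shows "card {I \<in> Pow (insert a A). P I}
       = card {I \<in> Pow A. P I} + card {I \<in> Pow A. P (insert a I)}"
proof -
  have split: "{I \<in> Pow (insert a A). P I}
      = {I \<in> Pow A. P I} \<union> insert a ` {I \<in> Pow A. P (insert a I)}"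
    by (auto simp: Pow_insert)
  have "inj_on (insert a) (Pow A)"
    using assms(2) by (auto simp: inj_on_def)
  then have "card (insert a ` {I \<in> Pow A. P (insert a I)}) = card {I \<in> Pow A. P (insert a I)}"
    by (rule card_image[OF inj_on_subset]) auto
  moreover have "{I \<in> Pow A. P I} \<inter> insert a ` {I \<in> Pow A. P (insert a I)} = {}"
    using assms(2) by auto
  ultimately show ?thesis
    unfolding split using assms(1) by (simp add: card_Un_disjoint)
qed

lemma shift_invariant_iterate:
  fixes g :: "int \<Rightarrow> 'b"
  assumes "\<And>t. g (t - a) = g t"
  shows "g (t - j * a) = g t"
proof (induction j rule: int_induct[where k = 0])
  case base
  then show ?case by simp
next
  case (step1 j)
  then show ?case using assms[of "t - j * a"] by (simp add: algebra_simps)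
next
  case (step2 j)
  then show ?case using assms[of "t - (j - 1) * a"] by (simp add: algebra_simps)
qed

lemma shift_alternating_iterate:
  fixes g :: "int \<Rightarrow> bool"
  assumes "\<And>t. g (t - a) = (\<not> g t)"
  shows "g (t - int j * a) = (g t = even j)"
proof (induction j)
  case 0
  then show ?case by simp
next
  case (Suc j)
  then show ?case using assms[of "t - int j * a"] by (simp add: algebra_simps)
qed

lemma shift_invariant_coprime_const:
  fixes g :: "int \<Rightarrow> 'b"
  assumes periodic: "\<And>s t. [s = t] (mod n) \<Longrightarrow> g s = g t"
    and "coprime a n" and shift: "\<And>t. g (t - a) = g t"
  shows "g s = g t"
proof -
  obtain u w where "u * a + w * n = 1"
    using \<open>coprime a n\<close> by (metis bezout_int coprime_iff_gcd_eq_1)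
  then have "(t - s) * (u * a) = (t - s) * (1 - w * n)"
    by (simp add: eq_diff_eq)
  then have "t - (t - s) * u * a = s + (t - s) * w * n"
    by (simp add: algebra_simps)
  then have "[s = t - (t - s) * u * a] (mod n)"
    by (simp add: cong_iff_dvd_diff)
  then have "g s = g (t - (t - s) * u * a)"
    by (rule periodic)
  also have "\<dots> = g t"
    using shift by (rule shift_invariant_iterate)
  finally show ?thesis .
qed

lemma odd_period_no_alternating_shift:
  fixes g :: "int \<Rightarrow> bool"
  assumes periodic: "\<And>s t. [s = t] (mod n) \<Longrightarrow> g s = g t" and "odd n"
  shows "\<exists>t. g (t - a) = g t"
proof (rule ccontr)
  assume no_dvd: "\<not> ?thesis"
  then have "g (0 - int (nat \<bar>n\<bar>) * a) = (g 0 = even (nat \<bar>n\<bar>))"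
    by (intro shift_alternating_iterate) auto
  moreover have "[0 - int (nat \<bar>n\<bar>) * a = 0] (mod n)"
    by (simp add: cong_iff_dvd_diff)
  ultimately show False
    using periodic \<open>odd n\<close> by (simp add: even_nat_iff)
qed

definition subset_sum_count :: "(nat \<Rightarrow> int) \<Rightarrow> int \<Rightarrow> nat \<Rightarrow> int \<Rightarrow> nat" where
  "subset_sum_count h n k t = card {I \<in> Pow {1..k}. [H_sub h I = t] (mod n)}"

lemma subset_sum_count_cong:
  assumes "[s = t] (mod n)"
  shows "subset_sum_count h n k s = subset_sum_count h n k t"
  using assms unfolding subset_sum_count_def
  by (metis (no_types, lifting) cong_sym cong_trans)

lemma subset_sum_count_0:
  "subset_sum_count h n 0 t = (if [0 = t] (mod n) then 1 else 0)"
proof -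
  have "{I \<in> Pow {1..0}. [H_sub h I = t] (mod n)} = (if [0 = t] (mod n) then {{}} else {})"
    by (auto simp: H_sub_def)
  then show ?thesis
    by (simp add: subset_sum_count_def)
qed

lemma subset_sum_count_Suc:
  "subset_sum_count h n (Suc k) t
     = subset_sum_count h n k t + subset_sum_count h n k (t - h (Suc k))"
proof -
  have "H_sub h (insert (Suc k) I) = h (Suc k) + H_sub h I" if "I \<in> Pow {1..k}" for I
  proof -
    have "finite I" and "Suc k \<notin> I"
      using that finite_subset[of I "{1..k}"] by auto
    then show ?thesis
      by (simp add: H_sub_def)
  qed
  then have "{I \<in> Pow {1..k}. [H_sub h (insert (Suc k) I) = t] (mod n)}
      = {I \<in> Pow {1..k}. [H_sub h I = t - h (Suc k)] (mod n)}"
    by (auto simp: cong_iff_dvd_diff algebra_simps)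
  moreover have "{1..Suc k} = insert (Suc k) {1..k}"
    by auto
  ultimately show ?thesis
    using card_Pow_insert_filter[of "{1..k}" "Suc k" "\<lambda>I. [H_sub h I = t] (mod n)"]
    unfolding subset_sum_count_def by simp
qed

lemma subset_sum_count_parity_nonconst:
  assumes "odd n" and "n > 1" and "\<forall>i\<in>{1..k}. coprime (h i) n"
  shows "\<exists>s t. even (subset_sum_count h n k s) \<noteq> even (subset_sum_count h n k t)"
  using assms(3)
proof (induction k)
  case 0
  have "\<not> [0 = 1] (mod n)"
    using \<open>n > 1\<close> by (simp add: cong_iff_dvd_diff zdvd_not_zless)
  then have "subset_sum_count h n 0 0 = 1" and "subset_sum_count h n 0 1 = 0"
    by (simp_all add: subset_sum_count_0)
  then show ?case
    by (metis even_zero odd_one)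
next
  case (Suc k)
  define g where "g t = even (subset_sum_count h n k t)" for t
  define a where "a = h (Suc k)"
  have periodic: "[s = t] (mod n) \<Longrightarrow> g s = g t" for s t
    unfolding g_def by (simp add: subset_sum_count_cong)
  have parity_Suc: "even (subset_sum_count h n (Suc k) t) = (g (t - a) = g t)" for t
    by (auto simp: subset_sum_count_Suc g_def a_def)
  obtain s t where "g s \<noteq> g t"
    using Suc by (auto simp: g_def)
  have "\<exists>t. g (t - a) = g t"
    using periodic \<open>odd n\<close> by (rule odd_period_no_alternating_shift)
  moreover have "\<exists>t. g (t - a) \<noteq> g t"
    using shift_invariant_coprime_const[of n g a s t] periodic Suc.prems \<open>g s \<noteq> g t\<close>
    by (auto simp: a_def)
  ultimately show ?case
    using parity_Suc by metis
qed

theorem lemma5p5: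
  fixes p :: nat and Q0 :: int and L v :: nat and h :: "nat \<Rightarrow> int"
  assumes "prime p" and "odd p"
    and "int p dvd Q0"
    and "L > 0" and "v > 0"
    and "\<forall>\<tau>\<in>{H_sub h I | I. I \<subseteq> {1..L}}.
           even (card {I. I \<subseteq> {1..L} \<and> [H_sub h I = \<tau>] (mod (int p ^ v))})"
  shows "\<exists>i\<in>{1..L}. int p dvd h i"
proof (rule ccontr)
  assume no_dvd: "\<not> ?thesis"
  define n where "n = int p ^ v"
  have "n > 1"
    using prime_gt_1_nat[OF \<open>prime p\<close>] \<open>v > 0\<close> by (simp add: n_def)
  moreover have "odd n"
    using \<open>odd p\<close> by (simp add: n_def)
  moreover have "\<forall>i\<in>{1..L}. coprime (h i) n"
    using no_dvd \<open>prime p\<close> by (auto simp: n_def prime_imp_coprime ac_simps)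
  ultimately obtain t where "odd (subset_sum_count h n L t)"
    using subset_sum_count_parity_nonconst by blast
  then have "{I \<in> Pow {1..L}. [H_sub h I = t] (mod n)} \<noteq> {}"
    by (metis card.empty even_zero subset_sum_count_def)
  then obtain I where I: "I \<subseteq> {1..L}" "[H_sub h I = t] (mod n)"
    by blast
  then have "subset_sum_count h n L t = subset_sum_count h n L (H_sub h I)"
    by (simp add: subset_sum_count_cong cong_sym)
  moreover have "even (subset_sum_count h n L (H_sub h I))"
    using assms(6) I(1) by (auto simp: subset_sum_count_def n_def)
  ultimately show False
    using \<open>odd (subset_sum_count h n L t)\<close> by simp
qed

end
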